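(* Let $X=\{x_0,\ldots,x_m\}$, $\tilde X=\{\tilde x_1,\ldots,\tilde x_q\}$ (commuting), $c\in\mathbb{R}^q\langle\langle X\rangle\rangle$ proper and $d\in\mathbb{R}^m[[\tilde X]]$ purely improper. Consider the closed-loop system in which the Chen-Fliess series $F_c$ is in multiplicative static output feedback with the formal static map $f_d$: $y=F_c[u]$, $u=v\cdot f_d(y)$ (componentwise product), with external input $v$. Then the closed-loop system is (formally) a Chen-Fliess series $y=F_e[v]$ with generating series given by the multiplicative static feedback product $e=c\,\bar{@}\,d:=c\,\tilde\circ\,\delta_{(d^{-1}\circ c)^{\circ-1}}$, where $d^{-1}\circ c$ is the Wiener-Fliess composition product.
   Context: Chen-Fliess series: $F_c[u](t)=\sum_{\eta\in X^\ast}(c,\eta)E_\eta[u](t,t_0)$, $E_\emptyset=1$, $E_{x_i\bar\eta}[u](t,t_0)=\int_{t_0}^tu_i(\tau)E_{\bar\eta}[u](\tau,t_0)d\tau$, $u_0=1$ (formal). Formal static map: $f_d(z)=\sum_{\eta\in\tilde X^\ast}(d,\eta)z^\eta$, $z\in\mathbb{R}^q$, $z^\emptyset=1$, $z^{\tilde x_i\eta}=z_iz^\eta$. Series conventions: coefficients in $\mathbb{R}^\ell$, componentwise products, proper = zero constant term, purely improper = each component has nonzero constant term; $d^{-1}$ the componentwise Cauchy inverse in $\mathbb{R}^m[[\tilde X]]$. Shuffle product $\sqcup\!\sqcup$: bilinear, $(x_i\eta)\sqcup\!\sqcup(x_j\xi)=x_i(\eta\sqcup\!\sqcup x_j\xi)+x_j(x_i\eta\sqcup\!\sqcup\xi)$,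 $\eta\sqcup\!\sqcup\emptyset=\emptyset\sqcup\!\sqcup\eta=\eta$; $g^{\sqcup\!\sqcup-1}$ componentwise shuffle inverse. Wiener-Fliess composition for proper $c$: $d\circ c=\sum_{\tilde\eta}(d,\tilde\eta)c^{\sqcup\!\sqcup\tilde\eta}$, $c^{\sqcup\!\sqcup\emptyset}=1$, $c^{\sqcup\!\sqcup\tilde x_i\tilde\eta}=c_i\sqcup\!\sqcup c^{\sqcup\!\sqcup\tilde\eta}$; it generates $f_d\circ F_c$. Multiplicative mixed composition: $c\,\tilde\circ\,\delta_g=\sum_\eta(c,\eta)\bar\phi_g(\eta)(\mathbf 1)$, $\mathbf 1=1\emptyset$, $\bar\phi_g(x_0)(w)=x_0w$, $\bar\phi_g(x_i)(w)=x_i(g_i\sqcup\!\sqcup w)$ ($i\ge1$), multiplicative; it generates $v\mapsto F_c[v\cdot F_g[v]]$. For purely improper $g\in\mathbb{R}^m\langle\langle X\rangle\rangle$, $g^{\circ-1}$ is the unique $h$ with $h=g^{\sqcup\!\sqcup-1}\,\tilde\circ\,\delta_h$. *)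

theory Defs
  imports Complex_Main "HOL-Library.Poly_Mapping"
begin

text \<open>A word over X is a list of letter indices (letter i stands for x_i, x_0 the drift
letter). A scalar series is a coefficient function on words; an R^l-valued series is
a family of scalar series indexed by the component number 1..l.\<close>

type_synonym word = "nat list"
type_synonym ser = "word \<Rightarrow> real"
type_synonym vser = "nat \<Rightarrow> ser"

definition one_ser :: ser where
  "one_ser w = (if w = [] then 1 else 0)"

definition shuffle :: "ser \<Rightarrow> ser \<Rightarrow> ser" where
  "shuffle a b w = (\<Sum>S\<in>Pow {0..<length w}. a (nths w S) * b (nths w (- S)))"

definition shuffle_inv :: "vser \<Rightarrow> vser" where
  "shuffle_inv g i = (THE b. shuffle (g i) b = one_ser)"

fun shuffle_pow :: "ser \<Rightarrow> nat \<Rightarrow> ser" where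
  "shuffle_pow a 0 = one_ser"
| "shuffle_pow a (Suc n) = shuffle a (shuffle_pow a n)"

type_synonym mono = "nat \<Rightarrow>\<^sub>0 nat"
type_synonym cser = "mono \<Rightarrow> real"
type_synonym vcser = "nat \<Rightarrow> cser"

definition mono_deg :: "mono \<Rightarrow> nat" where
  "mono_deg \<alpha> = (\<Sum>i\<in>Poly_Mapping.keys \<alpha>. Poly_Mapping.lookup \<alpha> i)"

definition cone :: cser where
  "cone \<alpha> = (if \<alpha> = 0 then 1 else 0)"

definition cmul :: "cser \<Rightarrow> cser \<Rightarrow> cser" where
  "cmul a b \<alpha> = (\<Sum>(\<beta>,\<gamma>)\<in>{(\<beta>,\<gamma>). \<beta> + \<gamma> = \<alpha>}. a \<beta> * b \<gamma>)"

definition cauchy_inv :: "vcser \<Rightarrow> vcser" where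
  "cauchy_inv d i = (THE b. cmul (d i) b = cone)"

definition shuffle_mono :: "vser \<Rightarrow> mono \<Rightarrow> ser" where
  "shuffle_mono c \<alpha> =
     foldr (\<lambda>i acc. shuffle (shuffle_pow (c i) (Poly_Mapping.lookup \<alpha> i)) acc)
           (sorted_list_of_set (Poly_Mapping.keys \<alpha>)) one_ser"

text \<open>For proper c, c^{shuffle alpha} only has words of length at least deg alpha, so the
coefficient of w is the displayed finite sum.\<close>
definition wf_comp :: "nat \<Rightarrow> vcser \<Rightarrow> vser \<Rightarrow> vser" where
  "wf_comp q d c i w =
     (\<Sum>\<alpha>\<in>{\<alpha>. Poly_Mapping.keys \<alpha> \<subseteq> {1..q} \<and> mono_deg \<alpha> \<le> length w}. d i \<alpha> * shuffle_mono c \<alpha> w)"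

definition letter_op :: "vser \<Rightarrow> nat \<Rightarrow> ser \<Rightarrow> ser" where
  "letter_op g a s w =
     (case w of [] \<Rightarrow> 0
      | b # w' \<Rightarrow> (if b = a then (if a = 0 then s w' else shuffle (g a) s w') else 0))"

fun phi :: "vser \<Rightarrow> word \<Rightarrow> ser \<Rightarrow> ser" where
  "phi g [] s = s"
| "phi g (a # \<eta>) s = letter_op g a (phi g \<eta> s)"

text \<open>c mixed-composed with delta_g. The word phi_g(eta)(1) only contains words in
which every letter of eta occurs, and of length at least |eta|, so the coefficient of
w is the displayed finite sum.\<close>
definition mixed_comp :: "vser \<Rightarrow> vser \<Rightarrow> vser" where
  "mixed_comp c g i w =
     (\<Sum>\<eta>\<in>{\<eta>. set \<eta> \<subseteq> set w \<and> length \<eta> \<le> length w}. c i \<eta> * phi g \<eta> one_ser w)"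

definition comp_inv :: "vser \<Rightarrow> vser" where
  "comp_inv g = (THE h. h = mixed_comp (shuffle_inv g) h)"

definition mult_static_fb :: "nat \<Rightarrow> vser \<Rightarrow> vcser \<Rightarrow> vser" where
  "mult_static_fb q c d = mixed_comp c (comp_inv (wf_comp q (cauchy_inv d) c))"

end

theory Submission
  imports Defs "HOL-Library.Function_Algebras"
begin

text \<open>Let h = (d^{-1} o c)^{o-1} and e = c ~o delta_h. The substitution s \<mapsto> s ~o delta_h is
a homomorphism of shuffle algebras, and it commutes with Wiener-Fliess composition:
(x o c) ~o delta_h = x o e. Applying it to the defining identity
h = (d^{-1} o c)^{shuffle -1} ~o delta_h gives h_a = (d_a^{-1} o e)^{shuffle -1}. Since x \<mapsto> x o e
turns Cauchy products into shuffle products (e is proper), this inverse is d_a o e.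
Hence h = d o e on the input letters, and e = c ~o delta_h = c ~o delta_{d o e}.
All three inverses exist and are unique because their defining equations are triangular:
each coefficient is determined by the coefficients of shorter words or lower degree.\<close>

subsection \<open>The shuffle algebra\<close>

definition lshift :: "nat \<Rightarrow> ser \<Rightarrow> ser" where
  "lshift x a = (\<lambda>v. a (x # v))"

lemma lshift_one_ser [simp]: "lshift x one_ser = 0"
  by (simp add: lshift_def fun_eq_iff one_ser_def)

lemma length_nths_le: "length (nths w S) \<le> length w"
  by (induction w arbitrary: S) (simp_all add: nths_Cons le_SucI)

lemma length_nths_compl: "length (nths w S) + length (nths w (- S)) = length w"
  by (induction w arbitrary: S) (simp_all add: nths_Cons Collect_neg_eq)

lemma length_nths_compl_less:
  assumes "S \<subseteq> {0..<length w}" and "S \<noteq> {}"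
  shows "length (nths w (- S)) < length w"
proof -
  have "{i. i < length w \<and> i \<in> S} = S" using assms(1) by auto
  then have "length (nths w S) = card S" by (simp add: length_nths)
  also have "\<dots> > 0" using assms by (simp add: card_gt_0_iff finite_subset)
  finally show ?thesis using length_nths_compl[of w S] by linarith
qed

lemma Pow_atLeast0LessThan_Suc:
  "Pow {0..<Suc n} = (\<lambda>T. Suc ` T) ` Pow {0..<n} \<union> (\<lambda>T. insert 0 (Suc ` T)) ` Pow {0..<n}"
proof (rule set_eqI, rule iffI)
  fix S assume S: "S \<in> Pow {0..<Suc n}"
  let ?T = "{j. Suc j \<in> S}"
  have T: "?T \<in> Pow {0..<n}" using S by auto
  have "S = (if 0 \<in> S then insert 0 (Suc ` ?T) else Suc ` ?T)"
    by (auto simp: image_iff) (metis not0_implies_Suc)+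
  then show "S \<in> (\<lambda>T. Suc ` T) ` Pow {0..<n} \<union> (\<lambda>T. insert 0 (Suc ` T)) ` Pow {0..<n}"
    using T by (auto split: if_splits)
qed auto

lemma shuffle_Nil [simp]: "shuffle a b [] = a [] * b []"
  by (simp add: shuffle_def)

lemma shuffle_Cons:
  "shuffle a b (x # w) = shuffle (lshift x a) b w + shuffle a (lshift x b) w"
proof -
  let ?f = "\<lambda>S. a (nths (x # w) S) * b (nths (x # w) (- S))"
  let ?P = "Pow {0..<length w}"
  have inj_Suc: "inj_on (\<lambda>T. Suc ` T) ?P"
    by (rule inj_onI) (simp add: inj_image_eq_iff)
  have inj_insert_Suc: "inj_on (\<lambda>T. insert 0 (Suc ` T)) ?P"
  proof (rule inj_onI)
    fix X Y :: "nat set" assume "insert 0 (Suc ` X) = insert 0 (Suc ` Y)"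
    then have "Suc ` X = Suc ` Y" by (metis Diff_insert_absorb imageE nat.distinct(1))
    then show "X = Y" by (simp add: inj_image_eq_iff)
  qed
  have Suc_preimage: "{j. Suc j \<in> Suc ` T} = T" "{j. Suc j \<notin> Suc ` T} = - T"
    "{j. Suc j \<in> insert 0 (Suc ` T)} = T" "{j. Suc j \<notin> insert 0 (Suc ` T)} = - T" for T
    by auto
  have "shuffle a b (x # w) = sum ?f ((\<lambda>T. Suc ` T) ` ?P) + sum ?f ((\<lambda>T. insert 0 (Suc ` T)) ` ?P)"
    unfolding shuffle_def by (simp only: length_Cons Pow_atLeast0LessThan_Suc)
      (rule sum.union_disjoint, auto)
  also have "sum ?f ((\<lambda>T. Suc ` T) ` ?P) = shuffle a (lshift x b) w"
    by (subst sum.reindex[OF inj_Suc]) (simp add: shuffle_def lshift_def nths_Cons Suc_preimage)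
  also have "sum ?f ((\<lambda>T. insert 0 (Suc ` T)) ` ?P) = shuffle (lshift x a) b w"
    by (subst sum.reindex[OF inj_insert_Suc]) (simp add: shuffle_def lshift_def nths_Cons Suc_preimage)
  finally show ?thesis by simp
qed

lemma lshift_shuffle: "lshift x (shuffle a b) = shuffle (lshift x a) b + shuffle a (lshift x b)"
  by (simp add: fun_eq_iff lshift_def shuffle_Cons)

lemma shuffle_cong:
  "(\<And>S. a (nths w S) = a' (nths w S)) \<Longrightarrow> (\<And>S. b (nths w S) = b' (nths w S))
   \<Longrightarrow> shuffle a b w = shuffle a' b' w"
  by (simp add: shuffle_def)

lemma shuffle_neq_0_imp: "shuffle a b w \<noteq> 0 \<Longrightarrow> \<exists>S. a (nths w S) \<noteq> 0 \<and> b (nths w (- S)) \<noteq> 0"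
  unfolding shuffle_def by (metis (no_types, lifting) mult_eq_0_iff sum.neutral)

lemma shuffle_zero_left [simp]: "shuffle 0 b = 0"
  and shuffle_zero_right [simp]: "shuffle a 0 = 0"
  by (simp_all add: fun_eq_iff shuffle_def)

lemma shuffle_add_left: "shuffle (a + b) c = shuffle a c + shuffle b c"
  and shuffle_add_right: "shuffle a (b + c) = shuffle a b + shuffle a c"
  by (simp_all add: fun_eq_iff shuffle_def algebra_simps sum.distrib)

lemma shuffle_sum_right:
  "shuffle a (\<lambda>v. \<Sum>j\<in>F. r j * f j v) w = (\<Sum>j\<in>F. r j * shuffle a (f j) w)"
  by (simp add: shuffle_def sum_distrib_left sum_distrib_right sum.swap[of _ F] algebra_simps)

lemma shuffle_commute: "shuffle a b = shuffle b a"
proof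
  fix w show "shuffle a b w = shuffle b a w"
    by (induction w arbitrary: a b) (simp_all add: shuffle_Cons)
qed

lemma shuffle_sum_left:
  "shuffle (\<lambda>v. \<Sum>j\<in>F. r j * f j v) b w = (\<Sum>j\<in>F. r j * shuffle (f j) b w)"
  by (simp add: shuffle_commute[of _ b] shuffle_sum_right)

lemma shuffle_assoc: "shuffle (shuffle a b) c = shuffle a (shuffle b c)"
proof
  fix w show "shuffle (shuffle a b) c w = shuffle a (shuffle b c) w"
    by (induction w arbitrary: a b c)
      (simp_all add: shuffle_Cons lshift_shuffle shuffle_add_left shuffle_add_right)
qed

lemma shuffle_one_left [simp]: "shuffle one_ser a = a"
proof
  fix w show "shuffle one_ser a w = a w"
  proof (induction w arbitrary: a)
    case (Cons x w)
    then show ?case by (simp add: shuffle_Cons lshift_def[of x a])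
  qed (simp add: one_ser_def)
qed

lemma shuffle_pow_add: "shuffle_pow a (m + n) = shuffle (shuffle_pow a m) (shuffle_pow a n)"
  by (induction m) (simp_all add: shuffle_assoc)

lemma shuffle_inverse_unique:
  assumes "shuffle a b = one_ser" and "shuffle a b' = one_ser"
  shows "b = b'"
  by (metis assms shuffle_assoc shuffle_commute shuffle_one_left)

interpretation shuffle_prod: comm_monoid_list_set shuffle one_ser
  by unfold_locales (metis shuffle_assoc shuffle_commute shuffle_one_left)+

definition vanishes_below :: "ser \<Rightarrow> nat \<Rightarrow> bool" where
  "vanishes_below a k \<longleftrightarrow> (\<forall>v. length v < k \<longrightarrow> a v = 0)"

lemma vanishes_below_0 [simp]: "vanishes_below a 0"
  by (simp add: vanishes_below_def)

lemma vanishes_below_shuffle: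
  assumes a: "vanishes_below a k" and b: "vanishes_below b l"
  shows "vanishes_below (shuffle a b) (k + l)"
  unfolding vanishes_below_def
proof (intro allI impI)
  fix v :: word assume v: "length v < k + l"
  have "a (nths v S) * b (nths v (- S)) = 0" for S
  proof -
    have "length (nths v S) < k \<or> length (nths v (- S)) < l"
      using length_nths_compl[of v S] v by linarith
    then show ?thesis using a b by (auto simp: vanishes_below_def)
  qed
  then show "shuffle a b v = 0" unfolding shuffle_def by (intro sum.neutral) blast
qed

lemma vanishes_below_shuffle_pow: "a [] = 0 \<Longrightarrow> vanishes_below (shuffle_pow a n) n"
proof (induction n)
  case (Suc n)
  have "vanishes_below a 1" using Suc.prems by (simp add: vanishes_below_def)
  from vanishes_below_shuffle[OF this Suc.IH[OF Suc.prems]] show ?case by simp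
qed simp

lemma vanishes_below_shuffle_prod:
  assumes "finite K" and "\<And>i. i \<in> K \<Longrightarrow> vanishes_below (f i) (k i)"
  shows "vanishes_below (shuffle_prod.set.F f K) (\<Sum>i\<in>K. k i)"
  using assms by (induction K rule: finite_induct) (simp_all add: vanishes_below_shuffle)

subsection \<open>Unique solutions of triangular systems\<close>

lemma ex1_fixpoint_if_local:
  fixes T :: "('k \<Rightarrow> 'v) \<Rightarrow> 'k \<Rightarrow> 'v" and \<mu> :: "'k \<Rightarrow> nat"
  assumes local: "\<And>f g x. (\<And>y. \<mu> y < \<mu> x \<Longrightarrow> f y = g y) \<Longrightarrow> T f x = T g x"
  shows "\<exists>!f. T f = f"
proof -
  define H where "H n = (T ^^ n) (\<lambda>_. undefined)" for n
  have H_Suc: "H (Suc n) = T (H n)" for n by (simp add: H_def)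
  text \<open>The iterates stabilise: the n-th one is final on points of measure below n.\<close>
  have stable: "\<mu> x < n \<Longrightarrow> H n x = H (Suc n) x" for n x
  proof (induction n arbitrary: x)
    case (Suc n)
    have "H (Suc n) x = T (H n) x" by (simp only: H_Suc)
    also have "\<dots> = T (H (Suc n)) x"
      by (rule local) (use Suc in simp)
    also have "\<dots> = H (Suc (Suc n)) x" by (simp only: H_Suc)
    finally show ?case .
  qed simp
  have stable_from: "H k x = H (Suc (\<mu> x)) x" if "Suc (\<mu> x) \<le> k" for k x
    using that
  proof (induction k rule: dec_induct)
    case (step k)
    then show ?case using stable[of x k] by simp
  qed simp
  define f where "f x = H (Suc (\<mu> x)) x" for x
  have fixpoint: "T f = f"
  proof
    fix x
    have "T f x = T (H (Suc (\<mu> x))) x"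
      by (rule local) (simp add: f_def stable_from[of _ "Suc (\<mu> x)"])
    also have "\<dots> = H (Suc (Suc (\<mu> x))) x" by (simp only: H_Suc)
    also have "\<dots> = f x" unfolding f_def by (rule stable_from) simp
    finally show "T f x = f x" .
  qed
  have "g = f" if "T g = g" for g
  proof
    fix x show "g x = f x"
    proof (induction x rule: measure_induct_rule[of \<mu>])
      case (less x)
      have "g x = T g x" using that by simp
      also have "\<dots> = T f x" by (rule local) (rule less)
      finally show ?case using fixpoint by simp
    qed
  qed
  with fixpoint show ?thesis by blast
qed

lemma ex1_solution_if_triangular:
  fixes R :: "('k \<Rightarrow> real) \<Rightarrow> 'k \<Rightarrow> real" and \<mu> :: "'k \<Rightarrow> nat"
  assumes a: "a \<noteq> 0"
    and local: "\<And>f g x. (\<And>y. \<mu> y < \<mu> x \<Longrightarrow> f y = g y) \<Longrightarrow> R f x = R g x"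
  shows "\<exists>!b. \<forall>x. a * b x + R b x = r x"
proof -
  define T where "T b x = (r x - R b x) / a" for b x
  have "T b = b \<longleftrightarrow> (\<forall>x. a * b x + R b x = r x)" for b
    using a by (auto simp: T_def fun_eq_iff field_simps)
  moreover have "\<exists>!b. T b = b"
  proof (rule ex1_fixpoint_if_local[where \<mu> = \<mu>])
    fix f g :: "'k \<Rightarrow> real" and x assume "\<And>y. \<mu> y < \<mu> x \<Longrightarrow> f y = g y"
    then have "R f x = R g x" by (rule local)
    then show "T f x = T g x" by (simp add: T_def)
  qed
  ultimately show ?thesis by simp
qed

lemma keys_add_mono: "Poly_Mapping.keys (\<alpha> + \<beta> :: mono) = Poly_Mapping.keys \<alpha> \<union> Poly_Mapping.keys \<beta>"
  by (auto simp: in_keys_iff lookup_add)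

lemma mono_deg_superset:
  "finite K \<Longrightarrow> Poly_Mapping.keys \<alpha> \<subseteq> K \<Longrightarrow> mono_deg \<alpha> = (\<Sum>i\<in>K. Poly_Mapping.lookup \<alpha> i)"
  unfolding mono_deg_def by (rule sum.mono_neutral_left) (auto simp: in_keys_iff)

lemma mono_deg_zero [simp]: "mono_deg 0 = 0"
  by (simp add: mono_deg_def)

lemma mono_deg_add: "mono_deg (\<alpha> + \<beta>) = mono_deg \<alpha> + mono_deg \<beta>"
proof -
  let ?K = "Poly_Mapping.keys \<alpha> \<union> Poly_Mapping.keys \<beta>"
  have "mono_deg (\<alpha> + \<beta>) = (\<Sum>i\<in>?K. Poly_Mapping.lookup (\<alpha> + \<beta>) i)"
    by (rule mono_deg_superset) (simp_all add: keys_add_mono)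
  also have "\<dots> = (\<Sum>i\<in>?K. Poly_Mapping.lookup \<alpha> i) + (\<Sum>i\<in>?K. Poly_Mapping.lookup \<beta> i)"
    by (simp add: lookup_add sum.distrib)
  also have "\<dots> = mono_deg \<alpha> + mono_deg \<beta>"
    by (simp add: mono_deg_superset[symmetric])
  finally show ?thesis .
qed

lemma lookup_le_mono_deg: "Poly_Mapping.lookup \<alpha> i \<le> mono_deg \<alpha>"
proof (cases "i \<in> Poly_Mapping.keys \<alpha>")
  case True
  then show ?thesis unfolding mono_deg_def by (intro member_le_sum) auto
qed (simp add: in_keys_iff)

lemma mono_deg_pos: "\<alpha> \<noteq> 0 \<Longrightarrow> 0 < mono_deg \<alpha>"
  by (metis lookup_le_mono_deg lookup_zero not_gr_zero le_zero_eq poly_mapping_eqI)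

lemma finite_mono_deg_le:
  assumes K: "finite K"
  shows "finite {\<alpha>::mono. Poly_Mapping.keys \<alpha> \<subseteq> K \<and> mono_deg \<alpha> \<le> N}" (is "finite ?A")
proof -
  have "Poly_Mapping.lookup ` ?A \<subseteq> {f. \<forall>x. (x \<in> K \<longrightarrow> f x \<in> {0..N}) \<and> (x \<notin> K \<longrightarrow> f x = 0)}"
  proof (clarsimp, intro conjI allI impI)
    fix \<alpha> :: mono and x assume \<alpha>: "Poly_Mapping.keys \<alpha> \<subseteq> K" "mono_deg \<alpha> \<le> N"
    show "Poly_Mapping.lookup \<alpha> x \<le> N" using lookup_le_mono_deg[of \<alpha> x] \<alpha> by simp
    assume "x \<notin> K"
    then show "Poly_Mapping.lookup \<alpha> x = 0" using \<alpha> by (auto simp: in_keys_iff)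
  qed
  then have "finite (Poly_Mapping.lookup ` ?A)"
    by (rule finite_subset) (rule finite_set_of_finite_funs[OF K], simp)
  then show ?thesis
    by (rule finite_imageD) (simp add: inj_on_def poly_mapping_eqI)
qed

lemma finite_add_decompositions: "finite {(\<beta>::mono, \<gamma>). \<beta> + \<gamma> = \<alpha>}"
proof -
  let ?B = "{\<beta>::mono. Poly_Mapping.keys \<beta> \<subseteq> Poly_Mapping.keys \<alpha> \<and> mono_deg \<beta> \<le> mono_deg \<alpha>}"
  have "{(\<beta>, \<gamma>). \<beta> + \<gamma> = \<alpha>} \<subseteq> ?B \<times> ?B"
    by (auto simp: keys_add_mono mono_deg_add)
  moreover have "finite (?B \<times> ?B)" by (simp add: finite_mono_deg_le)
  ultimately show ?thesis by (rule finite_subset)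
qed

subsection \<open>Shuffle and Cauchy inverses\<close>

lemma shuffle_eq_constant_term_plus:
  "shuffle a b w = a [] * b w + (\<Sum>S\<in>Pow {0..<length w} - {{}}. a (nths w S) * b (nths w (- S)))"
  unfolding shuffle_def by (subst sum.remove[of _ "{}"]) (auto simp: nths_all)

lemma shuffle_inv_ex1:
  assumes "a [] \<noteq> 0"
  shows "\<exists>!b. shuffle a b = one_ser"
proof -
  have "\<exists>!b. \<forall>w. a [] * b w
          + (\<Sum>S\<in>Pow {0..<length w} - {{}}. a (nths w S) * b (nths w (- S))) = one_ser w"
  proof (rule ex1_solution_if_triangular[where \<mu> = length])
    fix f g :: ser and w :: word
    assume shorter: "\<And>v. length v < length w \<Longrightarrow> f v = g v"
    have "f (nths w (- S)) = g (nths w (- S))" if "S \<in> Pow {0..<length w} - {{}}" for S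
      using that by (intro shorter length_nths_compl_less) auto
    then show "(\<Sum>S\<in>Pow {0..<length w} - {{}}. a (nths w S) * f (nths w (- S)))
             = (\<Sum>S\<in>Pow {0..<length w} - {{}}. a (nths w S) * g (nths w (- S)))"
      by (intro sum.cong) simp_all
  qed fact
  then show ?thesis by (simp add: fun_eq_iff shuffle_eq_constant_term_plus)
qed

lemma shuffle_shuffle_inv: "g i [] \<noteq> 0 \<Longrightarrow> shuffle (g i) (shuffle_inv g i) = one_ser"
  unfolding shuffle_inv_def by (rule theI'[OF shuffle_inv_ex1])

lemma cmul_eq_constant_term_plus:
  "cmul x y \<alpha> = x 0 * y \<alpha> + (\<Sum>p\<in>{(\<beta>, \<gamma>). \<beta> + \<gamma> = \<alpha>} - {(0, \<alpha>)}. x (fst p) * y (snd p))"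
  unfolding cmul_def
  by (subst sum.remove[of _ "(0, \<alpha>)"]) (simp_all add: finite_add_decompositions case_prod_beta)

lemma cmul_at_0: "cmul x y 0 = x 0 * y 0"
proof -
  have no_other: "{(\<beta>::mono, \<gamma>). \<beta> + \<gamma> = 0} - {(0, 0)} = {}"
    by (auto simp: poly_mapping_eq_iff fun_eq_iff lookup_add)
  show ?thesis unfolding cmul_eq_constant_term_plus no_other by simp
qed

lemma cauchy_inv_ex1:
  assumes "x 0 \<noteq> 0"
  shows "\<exists>!b. cmul x b = cone"
proof -
  have "\<exists>!b. \<forall>\<alpha>. x 0 * b \<alpha>
          + (\<Sum>p\<in>{(\<beta>, \<gamma>). \<beta> + \<gamma> = \<alpha>} - {(0, \<alpha>)}. x (fst p) * b (snd p)) = cone \<alpha>"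
  proof (rule ex1_solution_if_triangular[where \<mu> = mono_deg])
    fix f g :: cser and \<alpha> :: mono
    assume smaller: "\<And>\<beta>. mono_deg \<beta> < mono_deg \<alpha> \<Longrightarrow> f \<beta> = g \<beta>"
    have "f (snd p) = g (snd p)" if "p \<in> {(\<beta>, \<gamma>). \<beta> + \<gamma> = \<alpha>} - {(0, \<alpha>)}" for p
    proof (rule smaller)
      have "fst p \<noteq> 0" using that by auto
      then show "mono_deg (snd p) < mono_deg \<alpha>"
        using that mono_deg_add[of "fst p" "snd p"] mono_deg_pos[of "fst p"] by auto
    qed
    then show "(\<Sum>p\<in>{(\<beta>, \<gamma>). \<beta> + \<gamma> = \<alpha>} - {(0, \<alpha>)}. x (fst p) * f (snd p))
             = (\<Sum>p\<in>{(\<beta>, \<gamma>). \<beta> + \<gamma> = \<alpha>} - {(0, \<alpha>)}. x (fst p) * g (snd p))"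
      by (intro sum.cong) simp_all
  qed fact
  then show ?thesis by (simp add: fun_eq_iff cmul_eq_constant_term_plus)
qed

lemma cmul_cauchy_inv: "d i 0 \<noteq> 0 \<Longrightarrow> cmul (d i) (cauchy_inv d i) = cone"
  unfolding cauchy_inv_def by (rule theI'[OF cauchy_inv_ex1])

subsection \<open>Mixed substitution\<close>

definition dominated_words :: "word \<Rightarrow> word set" where
  "dominated_words w = {\<eta>. set \<eta> \<subseteq> set w \<and> length \<eta> \<le> length w}"

lemma finite_dominated_words: "finite (dominated_words w)"
  unfolding dominated_words_def by (rule finite_lists_length_le) simp

lemma dominated_words_nths: "dominated_words (nths w S) \<subseteq> dominated_words w"
  using set_nths_subset[of w S] length_nths_le[of w S] by (auto simp: dominated_words_def)

lemma dominated_words_subset_Cons: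
  "dominated_words w \<subseteq> dominated_words (b # w) - {\<eta>. length \<eta> = Suc (length w)}"
  by (auto simp: dominated_words_def)

definition mixed_subst :: "vser \<Rightarrow> ser \<Rightarrow> ser" where
  "mixed_subst h s w = (\<Sum>\<eta>\<in>dominated_words w. s \<eta> * phi h \<eta> one_ser w)"

lemma mixed_comp_eq_mixed_subst: "mixed_comp c g i = mixed_subst g (c i)"
  by (simp add: fun_eq_iff mixed_comp_def mixed_subst_def dominated_words_def)

lemma phi_nonzero_imp_dominated:
  "phi h \<eta> one_ser w \<noteq> 0 \<Longrightarrow> \<eta> \<in> dominated_words w"
proof (induction \<eta> arbitrary: w)
  case Nil
  then show ?case by (simp add: dominated_words_def)
next
  case (Cons a \<eta>)
  obtain w' where w: "w = a # w'"
    using Cons.prems by (cases w) (auto simp: letter_op_def split: if_splits)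
  have "\<exists>v. phi h \<eta> one_ser v \<noteq> 0 \<and> set v \<subseteq> set w' \<and> length v \<le> length w'"
  proof (cases "a = 0")
    case True
    then show ?thesis using Cons.prems w by (auto simp: letter_op_def)
  next
    case False
    then have "shuffle (h a) (phi h \<eta> one_ser) w' \<noteq> 0"
      using Cons.prems w by (simp add: letter_op_def)
    then obtain S where "phi h \<eta> one_ser (nths w' (- S)) \<noteq> 0"
      using shuffle_neq_0_imp by blast
    then show ?thesis by (intro exI[of _ "nths w' (- S)"]) (simp add: set_nths_subset length_nths_le)
  qed
  then obtain v where v: "phi h \<eta> one_ser v \<noteq> 0" "set v \<subseteq> set w'" "length v \<le> length w'"
    by blast
  from Cons.IH[OF v(1)] show ?case using w v(2,3) by (auto simp: dominated_words_def)
qed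

lemma mixed_subst_eq_sum:
  assumes "finite F" and "\<And>\<eta>. phi h \<eta> one_ser w \<noteq> 0 \<Longrightarrow> \<eta> \<in> F"
  shows "mixed_subst h s w = (\<Sum>\<eta>\<in>F. s \<eta> * phi h \<eta> one_ser w)"
proof -
  have "mixed_subst h s w = (\<Sum>\<eta>\<in>dominated_words w \<inter> F. s \<eta> * phi h \<eta> one_ser w)"
    unfolding mixed_subst_def
    by (rule sum.mono_neutral_right) (use finite_dominated_words assms(2) in auto)
  also have "\<dots> = (\<Sum>\<eta>\<in>F. s \<eta> * phi h \<eta> one_ser w)"
    by (rule sum.mono_neutral_left) (use assms phi_nonzero_imp_dominated in auto)
  finally show ?thesis .
qed

lemma mixed_subst_Nil [simp]: "mixed_subst h s [] = s []"
proof -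
  have "dominated_words [] = {[]}" by (auto simp: dominated_words_def)
  then show ?thesis by (simp add: mixed_subst_def one_ser_def)
qed

lemma mixed_subst_Cons_eq_sum:
  "mixed_subst h s (b # w) = (\<Sum>\<eta>\<in>dominated_words (b # w) - {\<eta>. length \<eta> = Suc (length w)}.
      lshift b s \<eta> * phi h (b # \<eta>) one_ser (b # w))"
  (is "_ = sum _ ?E")
proof -
  have "mixed_subst h s (b # w) = (\<Sum>\<eta>\<in>Cons b ` ?E. s \<eta> * phi h \<eta> one_ser (b # w))"
  proof (rule mixed_subst_eq_sum)
    show "finite (Cons b ` ?E)" by (intro finite_imageI finite_Diff finite_dominated_words)
    fix \<eta> assume nz: "phi h \<eta> one_ser (b # w) \<noteq> 0"
    then have "\<eta> \<in> dominated_words (b # w)" by (rule phi_nonzero_imp_dominated)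
    moreover obtain \<eta>' where "\<eta> = b # \<eta>'"
      using nz by (cases \<eta>) (auto simp: one_ser_def letter_op_def split: if_splits)
    ultimately show "\<eta> \<in> Cons b ` ?E" by (auto simp: dominated_words_def)
  qed
  then show ?thesis by (simp add: sum.reindex lshift_def)
qed

lemma mixed_subst_Cons_drift: "mixed_subst h s (0 # w) = mixed_subst h (lshift 0 s) w"
proof -
  let ?E = "dominated_words (0 # w) - {\<eta>. length \<eta> = Suc (length w)}"
  have "mixed_subst h s (0 # w) = (\<Sum>\<eta>\<in>?E. lshift 0 s \<eta> * phi h \<eta> one_ser w)"
    by (simp add: mixed_subst_Cons_eq_sum letter_op_def)
  also have "\<dots> = mixed_subst h (lshift 0 s) w"
    using dominated_words_subset_Cons[of w 0]
    by (intro mixed_subst_eq_sum[symmetric]) (auto simp: finite_dominated_words dest!: phi_nonzero_imp_dominated)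
  finally show ?thesis .
qed

lemma mixed_subst_Cons:
  assumes "b \<noteq> 0"
  shows "mixed_subst h s (b # w) = shuffle (h b) (mixed_subst h (lshift b s)) w"
proof -
  let ?E = "dominated_words (b # w) - {\<eta>. length \<eta> = Suc (length w)}"
  have "mixed_subst h s (b # w) = (\<Sum>\<eta>\<in>?E. lshift b s \<eta> * shuffle (h b) (phi h \<eta> one_ser) w)"
    using assms by (simp add: mixed_subst_Cons_eq_sum letter_op_def)
  also have "\<dots> = shuffle (h b) (\<lambda>v. \<Sum>\<eta>\<in>?E. lshift b s \<eta> * phi h \<eta> one_ser v) w"
    by (rule shuffle_sum_right[symmetric])
  also have "\<dots> = shuffle (h b) (mixed_subst h (lshift b s)) w"
  proof (rule shuffle_cong)
    fix S
    show "(\<Sum>\<eta>\<in>?E. lshift b s \<eta> * phi h \<eta> one_ser (nths w S)) = mixed_subst h (lshift b s) (nths w S)"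
      using dominated_words_nths[of w S] dominated_words_subset_Cons[of w b]
      by (intro mixed_subst_eq_sum[symmetric]) (auto simp: finite_dominated_words dest!: phi_nonzero_imp_dominated)
  qed simp
  finally show ?thesis .
qed

lemma lshift_mixed_subst_drift: "lshift 0 (mixed_subst h s) = mixed_subst h (lshift 0 s)"
  by (simp add: fun_eq_iff lshift_def mixed_subst_Cons_drift)

lemma lshift_mixed_subst:
  "b \<noteq> 0 \<Longrightarrow> lshift b (mixed_subst h s) = shuffle (h b) (mixed_subst h (lshift b s))"
  by (simp add: fun_eq_iff lshift_def mixed_subst_Cons)

lemma mixed_subst_zero [simp]: "mixed_subst h 0 = 0"
  by (simp add: fun_eq_iff mixed_subst_def)

lemma mixed_subst_add: "mixed_subst h (a + b) = mixed_subst h a + mixed_subst h b"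
  by (simp add: fun_eq_iff mixed_subst_def algebra_simps sum.distrib)

lemma mixed_subst_one_ser [simp]: "mixed_subst h one_ser = one_ser"
proof
  fix w show "mixed_subst h one_ser w = one_ser w"
  proof (cases w)
    case (Cons b w')
    then show ?thesis
      by (cases "b = 0") (simp_all add: mixed_subst_Cons_drift mixed_subst_Cons one_ser_def)
  qed simp
qed

lemma mixed_subst_shuffle:
  "mixed_subst h (shuffle a b) = shuffle (mixed_subst h a) (mixed_subst h b)"
proof
  fix w
  show "mixed_subst h (shuffle a b) w = shuffle (mixed_subst h a) (mixed_subst h b) w"
  proof (induction "length w" arbitrary: w a b rule: less_induct)
    case less
    show ?case
    proof (cases w)
      case (Cons x w')
      have IH: "mixed_subst h (shuffle a' b') v = shuffle (mixed_subst h a') (mixed_subst h b') v"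
        if "length v \<le> length w'" for a' b' v
        using less that Cons by simp
      show ?thesis
      proof (cases "x = 0")
        case True
        then show ?thesis using Cons
          by (simp add: mixed_subst_Cons_drift lshift_shuffle mixed_subst_add IH shuffle_Cons
              lshift_mixed_subst_drift)
      next
        case False
        let ?a = "mixed_subst h a" and ?b = "mixed_subst h b"
          and ?a' = "mixed_subst h (lshift x a)" and ?b' = "mixed_subst h (lshift x b)"
        have "mixed_subst h (shuffle a b) w
            = shuffle (h x) (mixed_subst h (shuffle (lshift x a) b) + mixed_subst h (shuffle a (lshift x b))) w'"
          using False Cons by (simp add: mixed_subst_Cons lshift_shuffle mixed_subst_add)
        also have "\<dots> = shuffle (h x) (shuffle ?a' ?b + shuffle ?a ?b') w'"
          by (rule shuffle_cong) (simp_all add: IH length_nths_le)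
        also have "\<dots> = shuffle (shuffle (h x) ?a') ?b w' + shuffle ?a (shuffle (h x) ?b') w'"
          by (simp add: shuffle_add_right shuffle_assoc) (metis shuffle_assoc shuffle_commute)
        also have "\<dots> = shuffle ?a ?b w"
          using False Cons by (simp add: shuffle_Cons lshift_mixed_subst)
        finally show ?thesis .
      qed
    qed simp
  qed
qed

lemma mixed_subst_shuffle_pow: "mixed_subst h (shuffle_pow a n) = shuffle_pow (mixed_subst h a) n"
  by (induction n) (simp_all add: mixed_subst_shuffle)

lemma mixed_subst_shuffle_prod:
  "mixed_subst h (shuffle_prod.set.F f K) = shuffle_prod.set.F (\<lambda>i. mixed_subst h (f i)) K"
proof (cases "finite K")
  case True
  then show ?thesis by (induction K rule: finite_induct) (simp_all add: mixed_subst_shuffle)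
qed simp

lemma phi_cong_shorter:
  "(\<And>j v. length v < length w \<Longrightarrow> h j v = h' j v) \<Longrightarrow> phi h \<eta> one_ser w = phi h' \<eta> one_ser w"
proof (induction \<eta> arbitrary: w)
  case (Cons a \<eta>)
  show ?case
  proof (cases w)
    case (Cons b w')
    have IH: "phi h \<eta> one_ser v = phi h' \<eta> one_ser v" if "length v \<le> length w'" for v
      by (rule Cons.IH) (use Cons.prems Cons that in auto)
    have "shuffle (h a) (phi h \<eta> one_ser) w' = shuffle (h' a) (phi h' \<eta> one_ser) w'"
    proof (rule shuffle_cong)
      fix S
      have "length (nths w' S) < length w" using length_nths_le[of w' S] Cons by simp
      then show "h a (nths w' S) = h' a (nths w' S)" by (rule Cons.prems)
      show "phi h \<eta> one_ser (nths w' S) = phi h' \<eta> one_ser (nths w' S)"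
        by (rule IH) (rule length_nths_le)
    qed
    then show ?thesis using Cons IH by (simp add: letter_op_def)
  qed (simp add: letter_op_def)
qed simp

lemma phi_cong_letters:
  "(\<And>a. a \<in> set \<eta> \<Longrightarrow> a \<noteq> 0 \<Longrightarrow> h a = h' a) \<Longrightarrow> phi h \<eta> s = phi h' \<eta> s"
  by (induction \<eta>) (auto simp: letter_op_def intro!: ext split: list.splits)

lemma mixed_comp_cong_letters:
  assumes "\<And>a. a \<in> {1..m} \<Longrightarrow> g a = g' a" and "set w \<subseteq> {0..m}"
  shows "mixed_comp c g i w = mixed_comp c g' i w"
  unfolding mixed_comp_def
proof (rule sum.cong[OF refl])
  fix \<eta> assume "\<eta> \<in> {\<eta>. set \<eta> \<subseteq> set w \<and> length \<eta> \<le> length w}"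
  then have "phi g \<eta> one_ser = phi g' \<eta> one_ser"
    using assms by (intro phi_cong_letters) auto
  then show "c i \<eta> * phi g \<eta> one_ser w = c i \<eta> * phi g' \<eta> one_ser w" by simp
qed

lemma comp_inv_fixpoint: "comp_inv g = mixed_comp (shuffle_inv g) (comp_inv g)"
proof -
  let ?T = "\<lambda>F (i, w). mixed_comp (shuffle_inv g) (curry F) i w"
  have "\<exists>!F. ?T F = F"
  proof (rule ex1_fixpoint_if_local[where \<mu> = "\<lambda>(i, w). length w"])
    fix F F' :: "nat \<times> word \<Rightarrow> real" and x :: "nat \<times> word"
    assume "\<And>y. (case y of (i, w) \<Rightarrow> length w) < (case x of (i, w) \<Rightarrow> length w) \<Longrightarrow> F y = F' y"
    then have "phi (curry F) \<eta> one_ser (snd x) = phi (curry F') \<eta> one_ser (snd x)" for \<eta>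
      by (intro phi_cong_shorter) (auto simp: case_prod_beta)
    then show "?T F x = ?T F' x" by (simp add: case_prod_beta mixed_comp_def)
  qed
  then have "\<exists>!h. h = mixed_comp (shuffle_inv g) h"
    by (metis (no_types, lifting) case_prod_curry cond_case_prod_eta curry_case_prod)
  then show ?thesis unfolding comp_inv_def by (rule theI')
qed

subsection \<open>Wiener-Fliess composition\<close>

lemma shuffle_mono_eq_shuffle_prod:
  assumes "finite K" and "Poly_Mapping.keys \<alpha> \<subseteq> K"
  shows "shuffle_mono c \<alpha> = shuffle_prod.set.F (\<lambda>i. shuffle_pow (c i) (Poly_Mapping.lookup \<alpha> i)) K"
proof -
  let ?f = "\<lambda>i. shuffle_pow (c i) (Poly_Mapping.lookup \<alpha> i)"
  have "shuffle_mono c \<alpha> = shuffle_prod.list.F (map ?f (sorted_list_of_set (Poly_Mapping.keys \<alpha>)))"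
    unfolding shuffle_mono_def shuffle_prod.list.eq_foldr by (simp add: foldr_map o_def)
  also have "\<dots> = shuffle_prod.set.F ?f (Poly_Mapping.keys \<alpha>)"
    by (simp add: shuffle_prod.distinct_set_conv_list[symmetric])
  also have "\<dots> = shuffle_prod.set.F ?f K"
    by (rule shuffle_prod.set.mono_neutral_left) (use assms in \<open>auto simp: in_keys_iff\<close>)
  finally show ?thesis .
qed

lemma shuffle_mono_zero [simp]: "shuffle_mono c 0 = one_ser"
  by (simp add: shuffle_mono_def)

lemma shuffle_mono_add:
  "shuffle_mono c (\<alpha> + \<beta>) = shuffle (shuffle_mono c \<alpha>) (shuffle_mono c \<beta>)"
proof -
  let ?K = "Poly_Mapping.keys \<alpha> \<union> Poly_Mapping.keys \<beta>"
  have "shuffle_mono c (\<alpha> + \<beta>)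
      = shuffle_prod.set.F (\<lambda>i. shuffle (shuffle_pow (c i) (Poly_Mapping.lookup \<alpha> i))
                                        (shuffle_pow (c i) (Poly_Mapping.lookup \<beta> i))) ?K"
    by (simp add: shuffle_mono_eq_shuffle_prod[of ?K] keys_add_mono lookup_add shuffle_pow_add)
  also have "\<dots> = shuffle (shuffle_mono c \<alpha>) (shuffle_mono c \<beta>)"
    by (simp add: shuffle_prod.set.distrib shuffle_mono_eq_shuffle_prod[of ?K])
  finally show ?thesis .
qed

lemma mixed_subst_shuffle_mono:
  "mixed_subst h (shuffle_mono c \<alpha>) = shuffle_mono (\<lambda>i. mixed_subst h (c i)) \<alpha>"
  by (simp add: shuffle_mono_eq_shuffle_prod[OF finite_keys order_refl]
      mixed_subst_shuffle_prod mixed_subst_shuffle_pow)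

definition proper :: "nat \<Rightarrow> vser \<Rightarrow> bool" where
  "proper q c \<longleftrightarrow> (\<forall>i\<in>{1..q}. c i [] = 0)"

lemma proper_mixed_subst: "proper q c \<Longrightarrow> proper q (\<lambda>i. mixed_subst h (c i))"
  by (simp add: proper_def)

lemma shuffle_mono_eq_0_if_short:
  assumes "proper q c" and "Poly_Mapping.keys \<alpha> \<subseteq> {1..q}" and "length w < mono_deg \<alpha>"
  shows "shuffle_mono c \<alpha> w = 0"
proof -
  have "vanishes_below (shuffle_mono c \<alpha>) (mono_deg \<alpha>)"
    unfolding shuffle_mono_eq_shuffle_prod[OF finite_keys order_refl] mono_deg_def
    using assms(1,2) by (intro vanishes_below_shuffle_prod vanishes_below_shuffle_pow)
      (auto simp: proper_def)
  then show ?thesis using assms(3) by (simp add: vanishes_below_def)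
qed

definition monos_deg_le :: "nat \<Rightarrow> nat \<Rightarrow> mono set" where
  "monos_deg_le q N = {\<alpha>. Poly_Mapping.keys \<alpha> \<subseteq> {1..q} \<and> mono_deg \<alpha> \<le> N}"

lemma finite_monos_deg_le: "finite (monos_deg_le q N)"
  unfolding monos_deg_le_def by (rule finite_mono_deg_le) simp

definition wf_eval :: "nat \<Rightarrow> vser \<Rightarrow> cser \<Rightarrow> ser" where
  "wf_eval q c x w = (\<Sum>\<alpha>\<in>monos_deg_le q (length w). x \<alpha> * shuffle_mono c \<alpha> w)"

lemma wf_comp_eq_wf_eval: "wf_comp q d c i = wf_eval q c (d i)"
  by (simp add: fun_eq_iff wf_comp_def wf_eval_def monos_deg_le_def)

lemma wf_eval_eq_sum:
  assumes "proper q c" and "length w \<le> N"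
  shows "wf_eval q c x w = (\<Sum>\<alpha>\<in>monos_deg_le q N. x \<alpha> * shuffle_mono c \<alpha> w)"
  unfolding wf_eval_def
proof (rule sum.mono_neutral_left)
  show "\<forall>\<alpha>\<in>monos_deg_le q N - monos_deg_le q (length w). x \<alpha> * shuffle_mono c \<alpha> w = 0"
    using assms(1) by (auto simp: monos_deg_le_def not_le shuffle_mono_eq_0_if_short)
qed (rule finite_monos_deg_le, use assms(2) in \<open>auto simp: monos_deg_le_def\<close>)

lemma wf_eval_Nil: "wf_eval q c x [] = x 0"
proof -
  have "monos_deg_le q 0 = {0}"
    by (auto simp: monos_deg_le_def) (metis mono_deg_pos not_less0)
  then show ?thesis by (simp add: wf_eval_def one_ser_def)
qed

lemma wf_eval_cone: "wf_eval q c cone = one_ser"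
proof
  fix w :: word
  have "wf_eval q c cone w
      = (\<Sum>\<alpha>\<in>monos_deg_le q (length w). if \<alpha> = 0 then shuffle_mono c \<alpha> w else 0)"
    unfolding wf_eval_def by (rule sum.cong) (auto simp: cone_def)
  also have "\<dots> = one_ser w"
    by (subst sum.delta[OF finite_monos_deg_le]) (simp add: monos_deg_le_def one_ser_def)
  finally show "wf_eval q c cone w = one_ser w" .
qed

lemma add_decompositions_eq:
  assumes "\<alpha> \<in> monos_deg_le q N"
  shows "{(\<beta>, \<gamma>). \<beta> + \<gamma> = \<alpha>} = {p \<in> monos_deg_le q N \<times> monos_deg_le q N. fst p + snd p = \<alpha>}"
  using assms by (auto simp: monos_deg_le_def keys_add_mono mono_deg_add)

lemma wf_eval_cmul:
  assumes c: "proper q c"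
  shows "wf_eval q c (cmul a b) = shuffle (wf_eval q c a) (wf_eval q c b)"
proof
  fix w :: word
  let ?A = "monos_deg_le q (length w)"
  let ?G = "\<lambda>p. a (fst p) * b (snd p) * shuffle_mono c (fst p + snd p) w"
  have fin: "finite ?A" by (rule finite_monos_deg_le)
  have "wf_eval q c (cmul a b) w
      = (\<Sum>\<alpha>\<in>?A. (\<Sum>p\<in>{p \<in> ?A \<times> ?A. fst p + snd p = \<alpha>}. a (fst p) * b (snd p)) * shuffle_mono c \<alpha> w)"
    unfolding wf_eval_def cmul_def
    by (rule sum.cong[OF refl]) (simp add: add_decompositions_eq case_prod_beta)
  also have "\<dots> = (\<Sum>\<alpha>\<in>?A. \<Sum>p\<in>?A \<times> ?A. if \<alpha> = fst p + snd p then ?G p else 0)"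
    by (intro sum.cong refl)
      (auto simp: sum_distrib_right sum.inter_filter fin eq_commute intro!: sum.cong)
  also have "\<dots> = (\<Sum>p\<in>?A \<times> ?A. if fst p + snd p \<in> ?A then ?G p else 0)"
    by (subst sum.swap) (simp add: sum.delta[OF fin])
  also have "\<dots> = (\<Sum>p\<in>?A \<times> ?A. ?G p)"
    using c by (intro sum.cong refl)
      (auto simp: monos_deg_le_def keys_add_mono not_le shuffle_mono_eq_0_if_short)
  also have "\<dots> = (\<Sum>\<beta>\<in>?A. \<Sum>\<gamma>\<in>?A. a \<beta> * (b \<gamma> * shuffle (shuffle_mono c \<beta>) (shuffle_mono c \<gamma>) w))"
    by (simp add: sum.cartesian_product shuffle_mono_add mult.assoc case_prod_beta)
  also have "\<dots> = shuffle (\<lambda>v. \<Sum>\<beta>\<in>?A. a \<beta> * shuffle_mono c \<beta> v)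
                         (\<lambda>v. \<Sum>\<gamma>\<in>?A. b \<gamma> * shuffle_mono c \<gamma> v) w"
    by (simp add: shuffle_sum_left shuffle_sum_right sum_distrib_left)
  also have "\<dots> = shuffle (wf_eval q c a) (wf_eval q c b) w"
    by (rule shuffle_cong; rule wf_eval_eq_sum[OF c length_nths_le, symmetric])
  finally show "wf_eval q c (cmul a b) w = shuffle (wf_eval q c a) (wf_eval q c b) w" .
qed

lemma mixed_subst_wf_eval:
  assumes c: "proper q c"
  shows "mixed_subst h (wf_eval q c x) = wf_eval q (\<lambda>i. mixed_subst h (c i)) x"
proof
  fix w :: word
  let ?A = "monos_deg_le q (length w)"
  have "mixed_subst h (wf_eval q c x) w
      = (\<Sum>\<eta>\<in>dominated_words w. (\<Sum>\<alpha>\<in>?A. x \<alpha> * shuffle_mono c \<alpha> \<eta>) * phi h \<eta> one_ser w)"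
    unfolding mixed_subst_def
    by (rule sum.cong[OF refl]) (simp add: wf_eval_eq_sum[OF c] dominated_words_def)
  also have "\<dots> = (\<Sum>\<alpha>\<in>?A. x \<alpha> * mixed_subst h (shuffle_mono c \<alpha>) w)"
    by (simp add: mixed_subst_def sum_distrib_left sum_distrib_right
        sum.swap[of _ "dominated_words w"] mult.assoc)
  also have "\<dots> = wf_eval q (\<lambda>i. mixed_subst h (c i)) x w"
    by (simp add: wf_eval_def mixed_subst_shuffle_mono)
  finally show "mixed_subst h (wf_eval q c x) w = wf_eval q (\<lambda>i. mixed_subst h (c i)) x w" .
qed

subsection \<open>The closed loop\<close>

lemma comp_inv_wf_comp_cauchy_inv:
  assumes c: "proper q c" and d: "d a 0 \<noteq> 0"
  shows "comp_inv (wf_comp q (cauchy_inv d) c) a = wf_comp q d (mult_static_fb q c d) a"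
proof -
  define G where "G = wf_comp q (cauchy_inv d) c"
  define h where "h = comp_inv G"
  define e where "e = (\<lambda>i. mixed_subst h (c i))"
  have fb: "mult_static_fb q c d = e"
    by (simp add: fun_eq_iff e_def mult_static_fb_def h_def G_def mixed_comp_eq_mixed_subst)
  have d_inv: "cmul (d a) (cauchy_inv d a) = cone" using d by (rule cmul_cauchy_inv)
  have "d a 0 * cauchy_inv d a 0 = 1"
    using fun_cong[OF d_inv, of 0] by (simp add: cmul_at_0 cone_def)
  then have "G a [] \<noteq> 0" by (auto simp: G_def wf_comp_eq_wf_eval wf_eval_Nil)
  then have "shuffle (mixed_subst h (G a)) (mixed_subst h (shuffle_inv G a)) = one_ser"
    by (metis shuffle_shuffle_inv mixed_subst_shuffle mixed_subst_one_ser)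
  moreover have "mixed_subst h (G a) = wf_eval q e (cauchy_inv d a)"
    by (simp add: G_def wf_comp_eq_wf_eval mixed_subst_wf_eval[OF c] e_def)
  moreover have "mixed_subst h (shuffle_inv G a) = h a"
    by (metis h_def comp_inv_fixpoint mixed_comp_eq_mixed_subst)
  moreover have "shuffle (wf_eval q e (cauchy_inv d a)) (wf_eval q e (d a)) = one_ser"
    using c d_inv unfolding e_def
    by (metis proper_mixed_subst shuffle_commute wf_eval_cmul wf_eval_cone)
  ultimately have "h a = wf_eval q e (d a)" by (metis shuffle_inverse_unique)
  then show ?thesis by (simp add: h_def G_def fb wf_comp_eq_wf_eval)
qed

theorem theorem18:
  fixes m q :: nat and c :: vser and d :: vcser
  assumes c_alph: "\<forall>i\<in>{1..q}. \<forall>w. c i w \<noteq> 0 \<longrightarrow> set w \<subseteq> {0..m}"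
    and c_proper: "\<forall>i\<in>{1..q}. c i [] = 0"
    and d_alph: "\<forall>i\<in>{1..m}. \<forall>\<alpha>. d i \<alpha> \<noteq> 0 \<longrightarrow> Poly_Mapping.keys \<alpha> \<subseteq> {1..q}"
    and d_pure_improper: "\<forall>i\<in>{1..m}. d i 0 \<noteq> 0"
  shows "\<forall>i\<in>{1..q}. \<forall>w. set w \<subseteq> {0..m} \<longrightarrow>
           mult_static_fb q c d i w
             = mixed_comp c (wf_comp q d (mult_static_fb q c d)) i w"
proof (intro ballI allI impI)
  fix i w assume w: "set w \<subseteq> {0..m}"
  have "mult_static_fb q c d i w = mixed_comp c (comp_inv (wf_comp q (cauchy_inv d) c)) i w"
    by (simp add: mult_static_fb_def)
  also have "\<dots> = mixed_comp c (wf_comp q d (mult_static_fb q c d)) i w"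
    using c_proper d_pure_improper comp_inv_wf_comp_cauchy_inv
    by (intro mixed_comp_cong_letters[OF _ w]) (simp add: proper_def)
  finally show "mult_static_fb q c d i w = mixed_comp c (wf_comp q d (mult_static_fb q c d)) i w" .
qed

end
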